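(* For each site $j$ of a lattice, let $a_{j\sigma}, b_{j\sigma}, c_{j\sigma}$ ($\sigma\in\{\uparrow,\downarrow\}$) be fermionic annihilation operators for the $d_{yz}, d_{zx}, d_{xy}$ orbitals, and let $\psi_{j\tau\sigma}$ ($\tau,\sigma\in\{\uparrow,\downarrow\}$) be fermionic annihilation operators forming the four-component spinor $\psi_j=(\psi_{j\uparrow\uparrow},\psi_{j\uparrow\downarrow},\psi_{j\downarrow\uparrow},\psi_{j\downarrow\downarrow})^t$. Substitute $$a_{j\sigma}^\dagger \to \frac{\sigma}{\sqrt6}\bigl(\psi_{j\uparrow\bar\sigma}^\dagger-\sqrt3\,\psi_{j\downarrow\sigma}^\dagger\bigr),\quad b_{j\sigma}^\dagger\to\frac{i}{\sqrt6}\bigl(\psi_{j\uparrow\bar\sigma}^\dagger+\sqrt3\,\psi_{j\downarrow\sigma}^\dagger\bigr),\quad c_{j\sigma}^\dagger\to\sqrt{\tfrac23}\,\psi_{j\uparrow\sigma}^\dagger$$ (and the Hermitian conjugate substitutions for the annihilation operators), where $\sigma=\pm1$ for $\uparrow,\downarrow$ in the prefactor and $\bar\sigma$ is the spin opposite to $\sigma$. Then for every bond $\langle ij\rangle$ of type $\alpha\in\{a,b,c\}$, with $(\alpha,\beta,\gamma)$ the cyclic permutation of $(a,b,c)$ starting at $\alpha$, $$-t\sum_\sigma\bigl(\beta_{i\sigma}^\dagger\gamma_{j\sigma}+\gamma_{i\sigma}^\dagger\beta_{j\sigma}\bigr)\;\longmapsto\;-\frac{t}{\sqrt3}\,\psi_i^\dagger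 U^\alpha\psi_j,$$ where $U^a=\tau^y\otimes I_2$, $U^b=-\tau^x\otimes\sigma^z$, $U^c=-\tau^x\otimes\sigma^y$, with $\boldsymbol\tau$ and $\boldsymbol\sigma$ Pauli matrices acting on the first and second index of $\psi_{j\tau\sigma}$ respectively, and $t\in\mathbb R$.
   Context: The orbital letters $a,b,c$ denote $d_{yz},d_{zx},d_{xy}$; a bond of type $\alpha$ is one whose superexchange path lies in the plane labelled by $\alpha$ ($a$: $yz$-plane, $b$: $zx$-plane, $c$: $xy$-plane). In the spinor $\psi_{j\tau\sigma}$, the first index $\tau$ is the pseudo-orbital and the second index $\sigma$ is the pseudospin; $(\psi_{\uparrow\uparrow},\psi_{\uparrow\downarrow},\psi_{\downarrow\uparrow},\psi_{\downarrow\downarrow})$ correspond to the $J_{\mathrm{eff}}=3/2$ states $J^z=3/2,-3/2,1/2,-1/2$. The matrices $U^a,U^b,U^c$ are Hermitian and unitary, and the $4\times4$ matrices act on $\psi_j$ in the basis ordering $(\uparrow\uparrow,\uparrow\downarrow,\downarrow\uparrow,\downarrow\downarrow)$ with $\tau$ the first tensor factor. *)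

theory Defs
  imports Complex_Main
begin

datatype spin = Up | Dn
datatype orb = OA | OB | OC   (* a = d_yz, b = d_zx, c = d_xy; also used for bond types *)

definition flip :: "spin \<Rightarrow> spin" where
  "flip s = (case s of Up \<Rightarrow> Dn | Dn \<Rightarrow> Up)"

definition ssign :: "spin \<Rightarrow> complex" where
  "ssign s = (case s of Up \<Rightarrow> 1 | Dn \<Rightarrow> -1)"

(* cyclic successor: (alpha, beta, gamma) = (alpha, nxt alpha, nxt (nxt alpha)) *)
definition nxt :: "orb \<Rightarrow> orb" where
  "nxt x = (case x of OA \<Rightarrow> OB | OB \<Rightarrow> OC | OC \<Rightarrow> OA)"

definition ind :: "bool \<Rightarrow> complex" where
  "ind b = (if b then 1 else 0)"

(* coefficient of psi^dagger_{j tau s} in the substitution for the creation operator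
   of orbital o with spin sg *)
definition coef :: "orb \<Rightarrow> spin \<Rightarrow> spin \<Rightarrow> spin \<Rightarrow> complex" where
  "coef ob sg tau s = (case ob of
      OA \<Rightarrow> ssign sg / sqrt 6 * (ind (tau = Up \<and> s = flip sg) - sqrt 3 * ind (tau = Dn \<and> s = sg))
    | OB \<Rightarrow> \<i> / sqrt 6 * (ind (tau = Up \<and> s = flip sg) + sqrt 3 * ind (tau = Dn \<and> s = sg))
    | OC \<Rightarrow> sqrt (2/3) * ind (tau = Up \<and> s = sg))"

(* Operators live in an arbitrary ring 'a; complex scalars enter through of_c.
   Substituted creation / annihilation operators of orbital o, spin sg at site j. *)
definition orb_dag :: "(complex \<Rightarrow> 'a::ring_1) \<Rightarrow> ('site \<Rightarrow> spin \<Rightarrow> spin \<Rightarrow> 'a)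
     \<Rightarrow> orb \<Rightarrow> 'site \<Rightarrow> spin \<Rightarrow> 'a" where
  "orb_dag of_c psi_dag ob j sg =
     (\<Sum>tau\<in>{Up,Dn}. \<Sum>s\<in>{Up,Dn}. of_c (coef ob sg tau s) * psi_dag j tau s)"

definition orb_ann :: "(complex \<Rightarrow> 'a::ring_1) \<Rightarrow> ('site \<Rightarrow> spin \<Rightarrow> spin \<Rightarrow> 'a)
     \<Rightarrow> orb \<Rightarrow> 'site \<Rightarrow> spin \<Rightarrow> 'a" where
  "orb_ann of_c psi ob j sg =
     (\<Sum>tau\<in>{Up,Dn}. \<Sum>s\<in>{Up,Dn}. of_c (cnj (coef ob sg tau s)) * psi j tau s)"

(* Pauli matrices, index Up = first row/column *)
definition pauliX :: "spin \<Rightarrow> spin \<Rightarrow> complex" where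
  "pauliX r c = (if r = c then 0 else 1)"
definition pauliY :: "spin \<Rightarrow> spin \<Rightarrow> complex" where
  "pauliY r c = (if r = c then 0 else if r = Up then - \<i> else \<i>)"
definition pauliZ :: "spin \<Rightarrow> spin \<Rightarrow> complex" where
  "pauliZ r c = (if r \<noteq> c then 0 else if r = Up then 1 else -1)"
definition id2 :: "spin \<Rightarrow> spin \<Rightarrow> complex" where
  "id2 r c = (if r = c then 1 else 0)"

(* U^alpha as a 4x4 matrix indexed by (tau,sigma) pairs; tensor product entries *)
definition Umat :: "orb \<Rightarrow> spin \<Rightarrow> spin \<Rightarrow> spin \<Rightarrow> spin \<Rightarrow> complex" where
  "Umat al tau s tau' s' = (case al of
      OA \<Rightarrow> pauliY tau tau' * id2 s s'
    | OB \<Rightarrow> - (pauliX tau tau' * pauliZ s s')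
    | OC \<Rightarrow> - (pauliX tau tau' * pauliY s s'))"

definition bilin :: "(complex \<Rightarrow> 'a::ring_1) \<Rightarrow> ('site \<Rightarrow> spin \<Rightarrow> spin \<Rightarrow> 'a)
    \<Rightarrow> ('site \<Rightarrow> spin \<Rightarrow> spin \<Rightarrow> 'a) \<Rightarrow> (spin \<Rightarrow> spin \<Rightarrow> spin \<Rightarrow> spin \<Rightarrow> complex)
    \<Rightarrow> 'site \<Rightarrow> 'site \<Rightarrow> 'a" where
  "bilin of_c psi_dag psi M i j =
     (\<Sum>tau\<in>{Up,Dn}. \<Sum>s\<in>{Up,Dn}. \<Sum>tau'\<in>{Up,Dn}. \<Sum>s'\<in>{Up,Dn}.
        psi_dag i tau s * of_c (M tau s tau' s') * psi j tau' s')"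

end

theory Submission imports Defs begin

text \<open>Both sides are bilinear in \<open>psi\<^sup>\<dagger>\<close> and \<open>psi\<close>, and \<open>of_c\<close> is a central ring
  homomorphism, so the identity reduces to an identity of \<open>4 \<times> 4\<close> coefficient matrices:
  summing the products of substitution coefficients over the spin and both hopping
  directions gives \<open>U\<^sup>\<alpha> / \<surd>3\<close>, which is checked entry by entry.\<close>

lemma of_c_zero:
  fixes of_c :: "complex \<Rightarrow> 'a::ring_1"
  assumes add: "\<And>x y. of_c (x + y) = of_c x + of_c y"
  shows "of_c 0 = 0"
  using add[of 0 0] by simp

lemma of_c_uminus:
  fixes of_c :: "complex \<Rightarrow> 'a::ring_1"
  assumes add: "\<And>x y. of_c (x + y) = of_c x + of_c y"
  shows "of_c (- z) = - of_c z"
  using add.inverse_unique[of "of_c z" "of_c (- z)"] add[of z "- z"] of_c_zero[OF add] by simp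

lemma bilin_add:
  fixes of_c :: "complex \<Rightarrow> 'a::ring_1"
  assumes add: "\<And>x y. of_c (x + y) = of_c x + of_c y"
  shows "bilin of_c psi_dag psi M i j + bilin of_c psi_dag psi N i j
       = bilin of_c psi_dag psi (\<lambda>tau s tau' s'. M tau s tau' s' + N tau s tau' s') i j"
  by (simp add: bilin_def add algebra_simps)

lemma bilin_sum:
  fixes of_c :: "complex \<Rightarrow> 'a::ring_1"
  assumes add: "\<And>x y. of_c (x + y) = of_c x + of_c y" and "finite A"
  shows "(\<Sum>x\<in>A. bilin of_c psi_dag psi (M x) i j)
       = bilin of_c psi_dag psi (\<lambda>tau s tau' s'. \<Sum>x\<in>A. M x tau s tau' s') i j"
  using \<open>finite A\<close>
proof (induction A rule: finite_induct)
  case empty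
  show ?case by (simp add: bilin_def of_c_zero[OF add])
next
  case (insert x A)
  then show ?case by (simp add: bilin_add[OF add])
qed

lemma bilin_scale:
  fixes of_c :: "complex \<Rightarrow> 'a::ring_1"
  assumes mult: "\<And>x y. of_c (x * y) = of_c x * of_c y"
    and central: "\<And>z x. of_c z * x = x * of_c z"
  shows "of_c z * bilin of_c psi_dag psi M i j
       = bilin of_c psi_dag psi (\<lambda>tau s tau' s'. z * M tau s tau' s') i j"
proof -
  have "of_c z * (x * of_c w * y) = x * of_c (z * w) * y" for w x y
    by (metis central mult mult.assoc)
  then show ?thesis
    unfolding bilin_def sum_distrib_left by simp
qed

lemma orb_dag_mult_orb_ann:
  fixes of_c :: "complex \<Rightarrow> 'a::ring_1"
  assumes mult: "\<And>x y. of_c (x * y) = of_c x * of_c y"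
    and central: "\<And>z x. of_c z * x = x * of_c z"
  shows "orb_dag of_c psi_dag o1 i sg * orb_ann of_c psi o2 j sg
       = bilin of_c psi_dag psi
           (\<lambda>tau s tau' s'. coef o1 sg tau s * cnj (coef o2 sg tau' s')) i j"
proof -
  have "of_c a * x * (of_c b * y) = x * of_c (a * b) * y" for a b x y
    by (metis central mult mult.assoc)
  then show ?thesis
    unfolding orb_dag_def orb_ann_def bilin_def sum_distrib_left sum_distrib_right
    by simp
qed

lemma hopping_coef_sum_eq_Umat:
  "(\<Sum>sg\<in>{Up,Dn}. coef (nxt al) sg tau s * cnj (coef (nxt (nxt al)) sg tau' s')
                  + coef (nxt (nxt al)) sg tau s * cnj (coef (nxt al) sg tau' s'))
   = Umat al tau s tau' s' / complex_of_real (sqrt 3)"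
proof -
  have sqrt6: "sqrt 6 = sqrt 2 * sqrt 3" by (simp flip: real_sqrt_mult)
  have sqrt_two_thirds: "sqrt (2/3) = sqrt 2 / sqrt 3" by (simp add: real_sqrt_divide)
  show ?thesis
    by (cases al; cases tau; cases s; cases tau'; cases s')
       (simp_all add: coef_def nxt_def Umat_def pauliX_def pauliY_def pauliZ_def id2_def
         ind_def flip_def ssign_def sqrt6 sqrt_two_thirds field_simps complex_eq_iff)
qed

theorem mainTheorem1:
  fixes of_c :: "complex \<Rightarrow> 'a::ring_1"
    and psi_dag psi :: "'site \<Rightarrow> spin \<Rightarrow> spin \<Rightarrow> 'a"
    and t :: real and i j :: 'site and al :: orb
  assumes add: "\<And>x y. of_c (x + y) = of_c x + of_c y"
    and mult: "\<And>x y. of_c (x * y) = of_c x * of_c y"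
    and one: "of_c 1 = 1"
    and central: "\<And>z x. of_c z * x = x * of_c z"
  shows "- of_c (complex_of_real t) *
           (\<Sum>sg\<in>{Up,Dn}.
              orb_dag of_c psi_dag (nxt al) i sg * orb_ann of_c psi (nxt (nxt al)) j sg
            + orb_dag of_c psi_dag (nxt (nxt al)) i sg * orb_ann of_c psi (nxt al) j sg)
         = - of_c (complex_of_real (t / sqrt 3)) * bilin of_c psi_dag psi (Umat al) i j"
proof -
  have finite_spins: "finite {Up, Dn}" by simp
  let ?U3 = "\<lambda>tau s tau' s'. Umat al tau s tau' s' / complex_of_real (sqrt 3)"
  have "(\<Sum>sg\<in>{Up,Dn}.
              orb_dag of_c psi_dag (nxt al) i sg * orb_ann of_c psi (nxt (nxt al)) j sg
            + orb_dag of_c psi_dag (nxt (nxt al)) i sg * orb_ann of_c psi (nxt al) j sg)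
        = bilin of_c psi_dag psi ?U3 i j"
    by (simp only: orb_dag_mult_orb_ann[OF mult central] bilin_add[OF add]
          bilin_sum[OF add finite_spins]
          hopping_coef_sum_eq_Umat)
  then show ?thesis
    by (simp add: of_c_uminus[OF add, symmetric] bilin_scale[OF mult central])
qed

end
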